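(* There exists $\psi\in C^2(\mathbb R_+)$ with $\psi\ge0$, $\psi(0)=0$, $0<\psi'\le1$, $-2\le\psi''\le0$, $\lim_{r\to\infty}\psi(r)=+\infty$, such that $$\sup_{\varepsilon\in[0,\ell)}\int_{\mathbb R^d}\psi\big(\log(1+|x|^2)\big)\mu^\varepsilon_0(dx)<\infty.$$
   Context: Fix $d\ge1$, $\ell\in(0,1/\sqrt2)$ and $\mu_0\in\mathcal P(\mathbb R^d)$. Let $\rho^{\rm x}\in C^\infty_c(\{|x|<1\};\mathbb R_+)$ with $\int\rho^{\rm x}=1$, $\rho^{\rm x}_\varepsilon(x)=\varepsilon^{-d}\rho^{\rm x}(x/\varepsilon)$, and $\phi(x)=(2\pi)^{-d/2}e^{-|x|^2/2}$. For $\varepsilon\in(0,\ell)$ let $\mu^\varepsilon_0(dx):=\big[(1-\varepsilon)(\rho^{\rm x}_\varepsilon*\mu_0)(x)+\varepsilon\phi(x)\big]dx$, and $\mu^0_0:=\mu_0$. *)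

theory Defs
  imports "HOL-Analysis.Analysis" "HOL-Probability.Probability"
begin

coinductive smooth_fun :: "('a::euclidean_space \<Rightarrow> real) \<Rightarrow> bool" where
  "(\<forall>x. f differentiable (at x)) \<Longrightarrow>
   (\<forall>i\<in>Basis. smooth_fun (\<lambda>x. frechet_derivative f (at x) i)) \<Longrightarrow> smooth_fun f"

definition mollifier :: "('a::euclidean_space \<Rightarrow> real) \<Rightarrow> real \<Rightarrow> 'a \<Rightarrow> real" where
  "mollifier \<rho> \<epsilon> x = \<epsilon> powi (- int DIM('a)) * \<rho> ((1 / \<epsilon>) *\<^sub>R x)"

definition gauss :: "'a::euclidean_space \<Rightarrow> real" where
  "gauss x = (2 * pi) powr (- real DIM('a) / 2) * exp (- (norm x)\<^sup>2 / 2)"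

definition mu_eps :: "'a::euclidean_space measure \<Rightarrow> ('a \<Rightarrow> real) \<Rightarrow> real \<Rightarrow> 'a measure" where
  "mu_eps \<mu>0 \<rho> \<epsilon> = (if \<epsilon> = 0 then \<mu>0 else
     density lborel (\<lambda>x. ennreal ((1 - \<epsilon>) * (\<integral>y. mollifier \<rho> \<epsilon> (x - y) \<partial>\<mu>0)
                                     + \<epsilon> * gauss x)))"

end

theory Submission
  imports Defs
begin

(*
  Take psi(r) = (SUM k. 1 - exp (- r / s k)) for scales s k >= 2^(k+1).  Each term is increasing and
  concave with slope at most 1 / s k, so SUM k. 1 / s k <= 1 gives 0 < psi' <= 1 and -1 <= psi'' <= 0,
  while psi tends to infinity because every term tends to 1.

  By dominated convergence the integral of the k-th term of psi (log (1 + |x|^2)) against mu_0 and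
  against the standard Gaussian tends to 0 as s k grows, so the scales can be chosen to make both
  integrals smaller than 2^-k; then psi (log (1 + |x|^2)) has integral at most 2 under both measures.
  Since psi is monotone and 1-Lipschitz, and log (1 + |x|^2) increases by at most ln 3 < 2 when x
  moves by less than 1, mollifying mu_0 at a scale eps < 1 adds at most 2 to the integral, and the
  Gaussian part of mu_0^eps adds at most 2 more: every mu_0^eps gives an integral of at most 6.
*)

section \<open>The series psi and its derivatives\<close>

lemma has_real_derivative_suminf_within:
  fixes f f' :: "nat \<Rightarrow> real \<Rightarrow> real"
  assumes "convex S" and "x \<in> S"
    and "\<And>n x. x \<in> S \<Longrightarrow> (f n has_real_derivative f' n x) (at x within S)"
    and "uniform_limit S (\<lambda>n x. \<Sum>i<n. f' i x) g' sequentially"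
    and "\<And>x. x \<in> S \<Longrightarrow> summable (\<lambda>n. f n x)"
  shows "((\<lambda>x. \<Sum>n. f n x) has_real_derivative g' x) (at x within S)"
proof -
  obtain g where g: "\<forall>x\<in>S. (\<lambda>n. f n x) sums g x \<and> (g has_real_derivative g' x) (at x within S)"
    using has_field_derivative_series[OF assms(1,3,4,2) assms(5)[OF assms(2)]] by blast
  have eq: "g y = (\<Sum>n. f n y)" if "y \<in> S" for y
    using g that by (simp add: sums_iff)
  have "(g has_real_derivative g' x) (at x within S)"
    using g assms(2) by blast
  then show ?thesis
    by (rule has_field_derivative_transform_within[OF _ zero_less_one assms(2)]) (simp add: eq)
qed

definition psi :: "(nat \<Rightarrow> real) \<Rightarrow> real \<Rightarrow> real" where
  "psi s r = (\<Sum>k. 1 - exp (- r / s k))"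

definition psi' :: "(nat \<Rightarrow> real) \<Rightarrow> real \<Rightarrow> real" where
  "psi' s r = (\<Sum>k. exp (- r / s k) / s k)"

definition psi'' :: "(nat \<Rightarrow> real) \<Rightarrow> real \<Rightarrow> real" where
  "psi'' s r = (\<Sum>k. - exp (- r / s k) / (s k)\<^sup>2)"

locale exp_scales =
  fixes s :: "nat \<Rightarrow> real"
  assumes one_le_scale: "1 \<le> s k"
    and summable_inverse_scale: "summable (\<lambda>k. 1 / s k)"
    and suminf_inverse_scale_le: "(\<Sum>k. 1 / s k) \<le> 1"

lemma exp_scalesI_geometric:
  assumes "\<And>k. 2 ^ Suc k \<le> s k"
  shows "exp_scales s"
proof
  have one_le: "1 \<le> s k" for k
    using assms[of k] one_le_power[of "2::real" "Suc k"] by linarith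
  then show "1 \<le> s k" for k .
  have le: "1 / s k \<le> (1/2) ^ Suc k" for k
  proof -
    have "1 / s k \<le> 1 / 2 ^ Suc k"
      using assms[of k] one_le[of k] by (intro divide_left_mono) auto
    then show ?thesis
      by (simp add: power_one_over)
  qed
  have norm_le: "norm (1 / s k) \<le> (1/2) ^ Suc k" for k
  proof -
    have "0 < s k"
      using one_le[of k] by linarith
    then show ?thesis
      using le[of k] by (simp only: real_norm_def abs_of_pos divide_pos_pos zero_less_one)
  qed
  have geometric: "(\<lambda>k. (1/2::real) ^ Suc k) sums 1"
    using sums_mult[OF geometric_sums[of "1/2::real"], of "1/2"] by simp
  show summable: "summable (\<lambda>k. 1 / s k)"
    using norm_le by (rule summable_comparison_test'[OF sums_summable[OF geometric]])
  show "(\<Sum>k. 1 / s k) \<le> 1"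
    using suminf_le[OF le summable sums_summable[OF geometric]] sums_unique[OF geometric]
    by simp
qed

context exp_scales
begin

lemma scale_pos: "0 < s k"
  using one_le_scale[of k] by linarith

lemma scale_nonzero [simp]: "s k \<noteq> 0"
  using scale_pos[of k] by simp

lemma psi_term_bounds:
  assumes "0 \<le> r"
  shows "0 \<le> 1 - exp (- r / s k)" and "1 - exp (- r / s k) \<le> r * (1 / s k)"
  using assms exp_ge_add_one_self[of "- r / s k"] scale_pos[of k] by auto

lemma norm_psi'_term_le: "0 \<le> r \<Longrightarrow> norm (exp (- r / s k) / s k) \<le> 1 / s k"
  using scale_pos[of k] by (auto intro!: divide_right_mono)

lemma norm_psi''_term_le: "0 \<le> r \<Longrightarrow> norm (- exp (- r / s k) / (s k)\<^sup>2) \<le> 1 / s k"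
proof -
  assume "0 \<le> r"
  then have "exp (- r / s k) \<le> 1"
    using scale_pos[of k] by auto
  then have "exp (- r / s k) / (s k)\<^sup>2 \<le> 1 / (s k)\<^sup>2"
    by (simp add: divide_right_mono)
  also have "\<dots> \<le> 1 / s k"
    using one_le_scale[of k] scale_pos[of k] by (simp add: power2_eq_square frac_le)
  finally show ?thesis by simp
qed

lemma summable_psi:
  assumes "0 \<le> r"
  shows "summable (\<lambda>k. 1 - exp (- r / s k))"
proof (rule summable_comparison_test'[OF summable_mult[OF summable_inverse_scale, of r]])
  show "norm (1 - exp (- r / s k)) \<le> r * (1 / s k)" for k
    using psi_term_bounds[OF assms, of k] by simp
qed

lemma summable_psi': "0 \<le> r \<Longrightarrow> summable (\<lambda>k. exp (- r / s k) / s k)"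
  using norm_psi'_term_le by (intro summable_comparison_test'[OF summable_inverse_scale])

lemma summable_psi'': "0 \<le> r \<Longrightarrow> summable (\<lambda>k. - exp (- r / s k) / (s k)\<^sup>2)"
  using norm_psi''_term_le by (intro summable_comparison_test'[OF summable_inverse_scale])

lemma uniform_limit_psi':
  "uniform_limit {0..} (\<lambda>n r. \<Sum>k<n. exp (- r / s k) / s k) (psi' s) sequentially"
  unfolding psi'_def[abs_def]
  using norm_psi'_term_le summable_inverse_scale by (intro Weierstrass_m_test) auto

lemma uniform_limit_psi'':
  "uniform_limit {0..} (\<lambda>n r. \<Sum>k<n. - exp (- r / s k) / (s k)\<^sup>2) (psi'' s) sequentially"
  unfolding psi''_def[abs_def]
  using norm_psi''_term_le summable_inverse_scale by (intro Weierstrass_m_test) auto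

lemma psi_has_real_derivative:
  "0 \<le> r \<Longrightarrow> (psi s has_real_derivative psi' s r) (at r within {0..})"
  unfolding psi_def[abs_def]
  using scale_pos summable_psi uniform_limit_psi'
  by (intro has_real_derivative_suminf_within)
     (auto intro!: derivative_eq_intros simp: field_simps)

lemma psi'_has_real_derivative:
  "0 \<le> r \<Longrightarrow> (psi' s has_real_derivative psi'' s r) (at r within {0..})"
  unfolding psi'_def[abs_def]
  using scale_pos summable_psi' uniform_limit_psi''
  by (intro has_real_derivative_suminf_within)
     (auto intro!: derivative_eq_intros simp: field_simps power2_eq_square)

lemma continuous_on_psi'': "continuous_on {0..} (psi'' s)"
  by (intro uniform_limit_theorem[OF _ uniform_limit_psi''] always_eventually allI continuous_intros)
     auto

lemma psi_0: "psi s 0 = 0"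
  by (simp add: psi_def)

lemma psi_nonneg: "0 \<le> r \<Longrightarrow> 0 \<le> psi s r"
  unfolding psi_def using summable_psi psi_term_bounds by (intro suminf_nonneg)

lemma psi'_pos: "0 \<le> r \<Longrightarrow> 0 < psi' s r"
  unfolding psi'_def using summable_psi' scale_pos by (intro suminf_pos) auto

lemma psi'_le_1:
  assumes "0 \<le> r"
  shows "psi' s r \<le> 1"
proof -
  have "psi' s r \<le> (\<Sum>k. 1 / s k)"
    unfolding psi'_def using abs_le_D1[OF norm_psi'_term_le[OF assms, unfolded real_norm_def]]
    by (intro suminf_le summable_psi' assms summable_inverse_scale)
  then show ?thesis
    using suminf_inverse_scale_le by linarith
qed

lemma psi''_nonpos: "0 \<le> r \<Longrightarrow> psi'' s r \<le> 0"
  unfolding psi''_def using suminf_le[OF _ summable_psi'' summable_zero] by simp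

lemma psi''_ge_minus_1: "0 \<le> r \<Longrightarrow> - 1 \<le> psi'' s r"
proof -
  assume r: "0 \<le> r"
  have "- 1 \<le> (\<Sum>k. - (1 / s k))"
    using suminf_minus[OF summable_inverse_scale] suminf_inverse_scale_le by simp
  also have "\<dots> \<le> psi'' s r"
    unfolding psi''_def using norm_psi''_term_le[OF r] summable_psi''[OF r]
      summable_minus[OF summable_inverse_scale]
    by (intro suminf_le) (auto simp: abs_le_iff)
  finally show ?thesis .
qed

lemma psi_diff_bounds:
  assumes "0 \<le> b" and "b \<le> a"
  shows "0 \<le> psi s a - psi s b" and "psi s a - psi s b \<le> a - b"
proof -
  obtain z where z: "b \<le> z" "psi s a - psi s b = psi' s z * (a - b)"
  proof (cases "b = a")
    case False
    with assms have "b < a"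
      by simp
    have "(psi s has_real_derivative psi' s z) (at z within {b..a})" if "b \<le> z" for z
    proof (rule has_field_derivative_subset)
      show "(psi s has_real_derivative psi' s z) (at z within {0..})"
        using that assms(1) by (intro psi_has_real_derivative) linarith
    qed (use assms(1) in auto)
    then have "(psi s has_derivative (*) (psi' s z)) (at z within {b..a})"
      if "b \<le> z" "z \<le> a" for z
      using that by (simp add: has_field_derivative_def)
    from mvt_simple[OF \<open>b < a\<close> this] obtain z
      where "z \<in> {b<..<a}" "psi s a - psi s b = psi' s z * (a - b)"
      by blast
    then show ?thesis
      by (intro that[of z]) auto
  qed (use that[of b] in simp)
  then have "0 \<le> psi' s z" and "psi' s z \<le> 1"
    using psi'_pos[of z] psi'_le_1[of z] assms by auto
  with z assms show "0 \<le> psi s a - psi s b" and "psi s a - psi s b \<le> a - b"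
    by (simp_all add: mult_left_le_one_le)
qed

lemma psi_le_add:
  assumes "0 \<le> a" and "0 \<le> b" and "0 \<le> c" and "a \<le> b + c"
  shows "psi s a \<le> psi s b + c"
proof (cases "a \<le> b")
  case True
  then show ?thesis
    using psi_diff_bounds(1)[of a b] assms by linarith
next
  case False
  then show ?thesis
    using psi_diff_bounds(2)[of b a] assms by linarith
qed

lemma psi_tendsto_at_top: "filterlim (psi s) at_top at_top"
proof (subst filterlim_at_top, intro allI)
  fix Z :: real
  define n where "n = nat \<lceil>2 * Z\<rceil>"
  show "eventually (\<lambda>r. Z \<le> psi s r) at_top"
    using eventually_ge_at_top[of "\<Sum>k<n. s k"]
  proof eventually_elim
    case (elim r)
    have "0 \<le> (\<Sum>k<n. s k)"
      using scale_pos by (intro sum_nonneg) (simp add: less_imp_le)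
    with elim have r: "0 \<le> r"
      by linarith
    have half: "1/2 \<le> 1 - exp (- r / s k)" if "k < n" for k
    proof -
      have "s k \<le> (\<Sum>k<n. s k)"
        using that scale_pos by (intro member_le_sum) (auto simp: less_imp_le)
      then have "1 \<le> r / s k"
        using elim scale_pos[of k] by simp
      then have "exp (- r / s k) \<le> exp (- 1)"
        by simp
      also have "exp (- 1 :: real) \<le> 1/2"
        using exp_ge_add_one_self[of 1] by (simp add: exp_minus field_simps)
      finally show ?thesis
        by linarith
    qed
    have "real n / 2 \<le> (\<Sum>k<n. 1 - exp (- r / s k))"
      using sum_mono[of "{..<n}" "\<lambda>_. 1/2", OF half] by simp
    also have "\<dots> \<le> psi s r"
      unfolding psi_def using psi_term_bounds(1)[OF r] by (intro sum_le_suminf summable_psi r) auto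
    finally show ?case
      unfolding n_def by linarith
  qed
qed

lemma borel_measurable_psi_comp:
  assumes [measurable]: "h \<in> borel_measurable M" and "\<And>x. 0 \<le> h x"
  shows "(\<lambda>x. psi s (h x)) \<in> borel_measurable M"
proof (rule borel_measurable_LIMSEQ_real[where u = "\<lambda>n x. \<Sum>k<n. 1 - exp (- h x / s k)"])
  show "(\<lambda>n. \<Sum>k<n. 1 - exp (- h x / s k)) \<longlonglongrightarrow> psi s (h x)" for x
    unfolding psi_def using summable_psi[OF assms(2)] by (rule summable_LIMSEQ)
qed measurable

lemma nn_integral_psi_comp:
  assumes [measurable]: "h \<in> borel_measurable M" and h: "\<And>x. 0 \<le> h x"
  shows "(\<integral>\<^sup>+x. ennreal (psi s (h x)) \<partial>M) = (\<Sum>k. \<integral>\<^sup>+x. ennreal (1 - exp (- h x / s k)) \<partial>M)"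
proof -
  have "(\<integral>\<^sup>+x. ennreal (psi s (h x)) \<partial>M) = (\<integral>\<^sup>+x. (\<Sum>k. ennreal (1 - exp (- h x / s k))) \<partial>M)"
    unfolding psi_def using summable_psi[OF h] psi_term_bounds(1)[OF h]
    by (intro nn_integral_cong) (simp add: suminf_ennreal2)
  also have "\<dots> = (\<Sum>k. \<integral>\<^sup>+x. ennreal (1 - exp (- h x / s k)) \<partial>M)"
    by (rule nn_integral_suminf) measurable
  finally show ?thesis .
qed

end

section \<open>Choice of the scales\<close>

lemma (in finite_measure) eventually_nn_integral_one_minus_exp_less:
  assumes [measurable]: "h \<in> borel_measurable M" and h: "\<And>x. 0 \<le> h x" and "0 < e"
  shows "eventually (\<lambda>t. (\<integral>\<^sup>+x. ennreal (1 - exp (- h x / t)) \<partial>M) < ennreal e) at_top"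
proof -
  have bounded: "0 \<le> 1 - exp (- h x / t) \<and> 1 - exp (- h x / t) \<le> 1" if "0 < t" for x t
    using h[of x] that by auto
  have "((\<lambda>t. \<integral>x. 1 - exp (- h x / t) \<partial>M) \<longlongrightarrow> (\<integral>x. 0 \<partial>M)) at_top"
  proof (rule integral_dominated_convergence_at_top[where w = "\<lambda>_. 1"])
    show "AE x in M. ((\<lambda>t. 1 - exp (- h x / t)) \<longlongrightarrow> 0) at_top"
    proof (rule AE_I2)
      fix x
      have "((\<lambda>t. 1 - exp (- (h x / t))) \<longlongrightarrow> 1 - exp (- 0)) at_top"
        by (intro tendsto_intros tendsto_divide_0[OF tendsto_const]
            filterlim_at_top_imp_at_infinity filterlim_ident)
      then show "((\<lambda>t. 1 - exp (- h x / t)) \<longlongrightarrow> 0) at_top"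
        by simp
    qed
    show "\<forall>\<^sub>F t in at_top. AE x in M. norm (1 - exp (- h x / t)) \<le> 1"
      using eventually_gt_at_top[of 0] by eventually_elim (use bounded in auto)
  qed auto
  then have "eventually (\<lambda>t. (\<integral>x. 1 - exp (- h x / t) \<partial>M) < e) at_top"
    using \<open>0 < e\<close> by (simp add: order_tendstoD(2))
  with eventually_gt_at_top[of 0] show ?thesis
  proof eventually_elim
    case (elim t)
    have "integrable M (\<lambda>x. 1 - exp (- h x / t))"
      using bounded[OF elim(1)] by (intro integrable_const_bound[where B = 1]) auto
    then have "(\<integral>\<^sup>+x. ennreal (1 - exp (- h x / t)) \<partial>M) = ennreal (\<integral>x. 1 - exp (- h x / t) \<partial>M)"
      using bounded[OF elim(1)] by (intro nn_integral_eq_integral) auto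
    with elim(2) \<open>0 < e\<close> show ?case
      by (simp add: ennreal_lessI)
  qed
qed

lemma exists_exp_scales_nn_integral_psi_le:
  assumes "finite Ms" and finite: "\<And>M. M \<in> Ms \<Longrightarrow> finite_measure M"
    and measurable: "\<And>M. M \<in> Ms \<Longrightarrow> h \<in> borel_measurable M" and h: "\<And>x. 0 \<le> h x"
  obtains s where "exp_scales s" and "\<And>M. M \<in> Ms \<Longrightarrow> (\<integral>\<^sup>+x. ennreal (psi s (h x)) \<partial>M) \<le> 2"
proof -
  have "\<exists>t. 2 ^ Suc k \<le> t \<and>
      (\<forall>M\<in>Ms. (\<integral>\<^sup>+x. ennreal (1 - exp (- h x / t)) \<partial>M) < ennreal ((1/2) ^ k))" for k
  proof -
    have "\<forall>M\<in>Ms. eventually (\<lambda>t. (\<integral>\<^sup>+x. ennreal (1 - exp (- h x / t)) \<partial>M) < ennreal ((1/2) ^ k)) at_top"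
      using finite_measure.eventually_nn_integral_one_minus_exp_less[OF finite measurable h] by simp
    then have "eventually (\<lambda>t. 2 ^ Suc k \<le> t \<and>
        (\<forall>M\<in>Ms. (\<integral>\<^sup>+x. ennreal (1 - exp (- h x / t)) \<partial>M) < ennreal ((1/2) ^ k))) at_top"
      using \<open>finite Ms\<close> by (intro eventually_conj eventually_ge_at_top eventually_ball_finite)
    then show ?thesis
      by (rule eventually_happens'[OF trivial_limit_at_top_linorder])
  qed
  then obtain s where s_ge: "\<And>k. 2 ^ Suc k \<le> s k"
    and s_small: "\<And>k M. M \<in> Ms \<Longrightarrow> (\<integral>\<^sup>+x. ennreal (1 - exp (- h x / s k)) \<partial>M) < ennreal ((1/2) ^ k)"
    by metis
  interpret exp_scales s
    using s_ge by (rule exp_scalesI_geometric)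
  have "(\<integral>\<^sup>+x. ennreal (psi s (h x)) \<partial>M) \<le> 2" if "M \<in> Ms" for M
  proof -
    have "(\<integral>\<^sup>+x. ennreal (psi s (h x)) \<partial>M) = (\<Sum>k. \<integral>\<^sup>+x. ennreal (1 - exp (- h x / s k)) \<partial>M)"
      using measurable[OF that] h by (rule nn_integral_psi_comp)
    also have "\<dots> \<le> (\<Sum>k. ennreal ((1/2) ^ k))"
      using s_small[OF that] by (intro suminf_le less_imp_le) auto
    also have "\<dots> = ennreal (\<Sum>k. (1/2) ^ k)"
      by (intro suminf_ennreal2) (auto intro: summable_geometric)
    also have "\<dots> = 2"
      using suminf_geometric[of "1/2::real"] by simp
    finally show ?thesis .
  qed
  with exp_scales_axioms show ?thesis
    by (rule that)
qed

section \<open>Integrals against the mollified laws\<close>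

lemma ennreal_integral_le_nn_integral:
  assumes "\<And>x. 0 \<le> f x"
  shows "ennreal (\<integral>x. f x \<partial>M) \<le> (\<integral>\<^sup>+x. ennreal (f x) \<partial>M)"
proof (cases "integrable M f")
  case True
  with assms show ?thesis
    by (simp add: nn_integral_eq_integral)
next
  case False
  then show ?thesis
    by (simp add: not_integrable_integral_eq)
qed

lemma nn_integral_lborel_affine:
  fixes f :: "'a::euclidean_space \<Rightarrow> ennreal"
  assumes [measurable]: "f \<in> borel_measurable borel" and c: "c \<noteq> 0"
  shows "(\<integral>\<^sup>+x. f x \<partial>lborel) = ennreal (\<bar>c\<bar> ^ DIM('a)) * (\<integral>\<^sup>+x. f (t + c *\<^sub>R x) \<partial>lborel)"
  by (subst lborel_affine[OF c, of t])
     (simp add: nn_integral_density nn_integral_distr nn_integral_cmult)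

lemma nn_integral_mollifier:
  fixes \<rho> :: "'a::euclidean_space \<Rightarrow> real"
  assumes [measurable]: "\<rho> \<in> borel_measurable borel" and nonneg: "\<And>x. 0 \<le> \<rho> x"
    and mass: "(\<integral>x. \<rho> x \<partial>lborel) = 1" and "0 < \<epsilon>"
  shows "(\<integral>\<^sup>+x. ennreal (mollifier \<rho> \<epsilon> (x - y)) \<partial>lborel) = 1"
proof -
  have "integrable lborel \<rho>"
    using mass not_integrable_integral_eq by fastforce
  have "(\<integral>\<^sup>+x. ennreal (mollifier \<rho> \<epsilon> (x - y)) \<partial>lborel)
      = ennreal (\<bar>\<epsilon>\<bar> ^ DIM('a)) * (\<integral>\<^sup>+x. ennreal (mollifier \<rho> \<epsilon> (y + \<epsilon> *\<^sub>R x - y)) \<partial>lborel)"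
    using \<open>0 < \<epsilon>\<close> unfolding mollifier_def by (intro nn_integral_lborel_affine) auto
  also have "\<dots> = (\<integral>\<^sup>+x. ennreal (\<bar>\<epsilon>\<bar> ^ DIM('a) * mollifier \<rho> \<epsilon> (y + \<epsilon> *\<^sub>R x - y)) \<partial>lborel)"
    using \<open>0 < \<epsilon>\<close> nonneg
    by (simp add: mollifier_def nn_integral_cmult[symmetric] ennreal_mult[symmetric])
  also have "\<dots> = (\<integral>\<^sup>+x. ennreal (\<rho> x) \<partial>lborel)"
    using \<open>0 < \<epsilon>\<close> by (simp add: mollifier_def power_int_minus field_simps)
  also have "\<dots> = 1"
    using \<open>integrable lborel \<rho>\<close> nonneg mass by (simp add: nn_integral_eq_integral)
  finally show ?thesis .
qed

lemma nn_integral_convolution_le: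
  fixes \<mu> :: "'a::euclidean_space measure" and k :: "'a \<Rightarrow> real" and P :: "'a \<Rightarrow> ennreal"
  assumes "prob_space \<mu>" and [measurable_cong]: "sets \<mu> = sets borel"
    and [measurable]: "k \<in> borel_measurable borel" and k_nonneg: "\<And>z. 0 \<le> k z"
    and k_mass: "\<And>y. (\<integral>\<^sup>+x. ennreal (k (x - y)) \<partial>lborel) = 1"
    and [measurable]: "P \<in> borel_measurable borel"
    and P_shift: "\<And>x y. k (x - y) \<noteq> 0 \<Longrightarrow> P x \<le> P y + c"
  shows "(\<integral>\<^sup>+x. ennreal (\<integral>y. k (x - y) \<partial>\<mu>) * P x \<partial>lborel) \<le> (\<integral>\<^sup>+y. P y \<partial>\<mu>) + c"
proof -
  interpret \<mu>: prob_space \<mu> by fact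
  interpret pair_sigma_finite lborel \<mu> ..
  have inner: "(\<integral>\<^sup>+x. ennreal (k (x - y)) * P x \<partial>lborel) \<le> P y + c" for y
  proof -
    have "ennreal (k (x - y)) * P x \<le> ennreal (k (x - y)) * (P y + c)" for x
      using P_shift[of x y] by (cases "k (x - y) = 0") (auto intro: mult_left_mono)
    then have "(\<integral>\<^sup>+x. ennreal (k (x - y)) * P x \<partial>lborel)
        \<le> (\<integral>\<^sup>+x. ennreal (k (x - y)) * (P y + c) \<partial>lborel)"
      by (intro nn_integral_mono)
    also have "\<dots> = P y + c"
      using k_mass[of y] by (simp add: nn_integral_multc)
    finally show ?thesis .
  qed
  have "(\<integral>\<^sup>+x. ennreal (\<integral>y. k (x - y) \<partial>\<mu>) * P x \<partial>lborel)
      \<le> (\<integral>\<^sup>+x. (\<integral>\<^sup>+y. ennreal (k (x - y)) \<partial>\<mu>) * P x \<partial>lborel)"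
    using k_nonneg by (intro nn_integral_mono mult_right_mono ennreal_integral_le_nn_integral) auto
  also have "\<dots> = (\<integral>\<^sup>+x. \<integral>\<^sup>+y. ennreal (k (x - y)) * P x \<partial>\<mu> \<partial>lborel)"
    by (simp add: nn_integral_multc)
  also have "\<dots> = (\<integral>\<^sup>+y. \<integral>\<^sup>+x. ennreal (k (x - y)) * P x \<partial>lborel \<partial>\<mu>)"
    by (rule Fubini'[symmetric]) measurable
  also have "\<dots> \<le> (\<integral>\<^sup>+y. P y + c \<partial>\<mu>)"
    by (intro nn_integral_mono inner)
  also have "\<dots> = (\<integral>\<^sup>+y. P y \<partial>\<mu>) + c"
    by (simp add: nn_integral_add \<mu>.emeasure_space_1)
  finally show ?thesis .
qed

lemma borel_measurable_gauss [measurable]: "gauss \<in> borel_measurable borel"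
  unfolding gauss_def[abs_def] by measurable

definition gauss_measure :: "'a::euclidean_space measure" where
  "gauss_measure = density lborel (\<lambda>x. ennreal (gauss x))"

lemma sets_gauss_measure [measurable_cong]: "sets gauss_measure = sets borel"
  by (simp add: gauss_measure_def)

lemma gauss_eq_prod_std_normal_density:
  "gauss (x::'a::euclidean_space) = (\<Prod>b\<in>Basis. std_normal_density (x \<bullet> b))"
proof -
  have "(\<Prod>b\<in>(Basis::'a set). 1 / sqrt (2 * pi)) = ((2 * pi) powr (- 1 / 2)) ^ DIM('a)"
    by (simp add: powr_minus_divide powr_half_sqrt)
  also have "\<dots> = (2 * pi) powr (- real DIM('a) / 2)"
    by (simp add: powr_power)
  finally have const: "(\<Prod>b\<in>(Basis::'a set). 1 / sqrt (2 * pi)) = (2 * pi) powr (- real DIM('a) / 2)" .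
  have "(norm x)\<^sup>2 = (\<Sum>b\<in>Basis. (x \<bullet> b)\<^sup>2)"
    unfolding power2_norm_eq_inner by (subst euclidean_inner) (simp add: power2_eq_square)
  then have "exp (- (norm x)\<^sup>2 / 2) = exp (\<Sum>b\<in>Basis. - (x \<bullet> b)\<^sup>2 / 2)"
    by (simp add: sum_negf sum_divide_distrib)
  also have "\<dots> = (\<Prod>b\<in>Basis. exp (- (x \<bullet> b)\<^sup>2 / 2))"
    by (rule exp_sum[OF finite_Basis])
  finally have exp_eq: "exp (- (norm x)\<^sup>2 / 2) = (\<Prod>b\<in>Basis. exp (- (x \<bullet> b)\<^sup>2 / 2))" .
  show ?thesis
    unfolding gauss_def std_normal_density_def prod.distrib const exp_eq ..
qed

lemma prob_space_gauss_measure: "prob_space (gauss_measure :: 'a::euclidean_space measure)"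
proof
  have std_normal: "(\<integral>\<^sup>+t. ennreal (std_normal_density t) \<partial>lborel) = 1"
    by (simp add: nn_integral_eq_integral)
  have "emeasure (gauss_measure :: 'a measure) (space gauss_measure)
      = (\<integral>\<^sup>+x. ennreal (gauss x) \<partial>(lborel :: 'a measure))"
    by (simp add: gauss_measure_def emeasure_density)
  also have "\<dots> = (\<integral>\<^sup>+x. (\<Prod>b\<in>Basis. ennreal (std_normal_density (x \<bullet> b))) \<partial>(lborel :: 'a measure))"
    by (intro nn_integral_cong) (simp add: gauss_eq_prod_std_normal_density prod_ennreal)
  also have "\<dots> = (\<Prod>b\<in>(Basis :: 'a set). \<integral>\<^sup>+t. ennreal (std_normal_density t) \<partial>lborel)"
    by (rule nn_integral_lborel_prod) auto
  finally show "emeasure (gauss_measure :: 'a measure) (space gauss_measure) = 1"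
    by (simp add: std_normal)
qed
lemma nn_integral_mu_eps_le:
  fixes \<mu>0 :: "'a::euclidean_space measure" and P :: "'a \<Rightarrow> ennreal"
  assumes "prob_space \<mu>0" and sets_\<mu>0 [measurable_cong]: "sets \<mu>0 = sets borel"
    and [measurable]: "\<rho> \<in> borel_measurable borel" and \<rho>_nonneg: "\<And>x. 0 \<le> \<rho> x"
    and \<rho>_mass: "(\<integral>x. \<rho> x \<partial>lborel) = 1" and \<rho>_support: "\<And>x. \<rho> x \<noteq> 0 \<Longrightarrow> norm x < 1"
    and [measurable]: "P \<in> borel_measurable borel"
    and P_shift: "\<And>x y. norm (x - y) < 1 \<Longrightarrow> P x \<le> P y + c"
    and "0 \<le> \<epsilon>" and "\<epsilon> < 1"
  shows "(\<integral>\<^sup>+x. P x \<partial>mu_eps \<mu>0 \<rho> \<epsilon>) \<le> (\<integral>\<^sup>+x. P x \<partial>\<mu>0) + c + (\<integral>\<^sup>+x. P x \<partial>gauss_measure)"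
proof (cases "\<epsilon> = 0")
  case True
  then show ?thesis
    by (simp add: mu_eps_def add.assoc)
next
  case False
  with \<open>0 \<le> \<epsilon>\<close> have "0 < \<epsilon>"
    by simp
  interpret \<mu>0: prob_space \<mu>0 by fact
  interpret pair_sigma_finite lborel \<mu>0 ..
  define m where "m = mollifier \<rho> \<epsilon>"
  have [measurable]: "m \<in> borel_measurable borel"
    unfolding m_def mollifier_def[abs_def] by measurable
  have m_nonneg: "0 \<le> m z" for z
    unfolding m_def mollifier_def using \<open>0 < \<epsilon>\<close> \<rho>_nonneg by simp
  have m_mass: "(\<integral>\<^sup>+x. ennreal (m (x - y)) \<partial>lborel) = 1" for y
    unfolding m_def using \<rho>_nonneg \<rho>_mass \<open>0 < \<epsilon>\<close> by (intro nn_integral_mollifier) auto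
  have m_shift: "P x \<le> P y + c" if "m (x - y) \<noteq> 0" for x y
  proof (rule P_shift)
    from that have "norm ((1 / \<epsilon>) *\<^sub>R (x - y)) < 1"
      unfolding m_def mollifier_def by (intro \<rho>_support) auto
    moreover have "norm ((1 / \<epsilon>) *\<^sub>R (x - y)) = norm (x - y) / \<epsilon>"
      using \<open>0 < \<epsilon>\<close> by simp
    ultimately have "norm (x - y) < \<epsilon>"
      using \<open>0 < \<epsilon>\<close> by (simp add: pos_divide_less_eq)
    with \<open>\<epsilon> < 1\<close> show "norm (x - y) < 1"
      by simp
  qed
  define I where "I x = (\<integral>y. m (x - y) \<partial>\<mu>0)" for x
  have [measurable]: "I \<in> borel_measurable borel"
    unfolding I_def by (rule \<mu>0.borel_measurable_lebesgue_integral) measurable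
  have density_le: "ennreal ((1 - \<epsilon>) * I x + \<epsilon> * gauss x) \<le> ennreal (I x) + ennreal (gauss x)" for x
  proof -
    have nonneg: "0 \<le> I x" "0 \<le> gauss x"
      unfolding I_def gauss_def using m_nonneg by (auto intro: integral_nonneg_AE)
    have "(1 - \<epsilon>) * I x \<le> I x" and "\<epsilon> * gauss x \<le> gauss x"
      using nonneg \<open>0 < \<epsilon>\<close> \<open>\<epsilon> < 1\<close> by (simp_all add: mult_left_le_one_le)
    then have "(1 - \<epsilon>) * I x + \<epsilon> * gauss x \<le> I x + gauss x"
      by (rule add_mono)
    then have "ennreal ((1 - \<epsilon>) * I x + \<epsilon> * gauss x) \<le> ennreal (I x + gauss x)"
      by (rule ennreal_leI)
    with nonneg show ?thesis
      by simp
  qed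
  have "mu_eps \<mu>0 \<rho> \<epsilon> = density lborel (\<lambda>x. ennreal ((1 - \<epsilon>) * I x + \<epsilon> * gauss x))"
    using False by (simp add: mu_eps_def I_def m_def)
  then have "(\<integral>\<^sup>+x. P x \<partial>mu_eps \<mu>0 \<rho> \<epsilon>)
      = (\<integral>\<^sup>+x. ennreal ((1 - \<epsilon>) * I x + \<epsilon> * gauss x) * P x \<partial>lborel)"
    by (simp add: nn_integral_density)
  also have "\<dots> \<le> (\<integral>\<^sup>+x. (ennreal (I x) + ennreal (gauss x)) * P x \<partial>lborel)"
    using density_le by (intro nn_integral_mono mult_right_mono) auto
  also have "\<dots> = (\<integral>\<^sup>+x. ennreal (I x) * P x \<partial>lborel) + (\<integral>\<^sup>+x. P x \<partial>gauss_measure)"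
    by (simp add: distrib_right nn_integral_add gauss_measure_def nn_integral_density)
  also have "\<dots> \<le> (\<integral>\<^sup>+x. P x \<partial>\<mu>0) + c + (\<integral>\<^sup>+x. P x \<partial>gauss_measure)"
    unfolding I_def
    by (intro add_right_mono nn_integral_convolution_le[OF \<open>prob_space \<mu>0\<close> sets_\<mu>0])
       (use m_nonneg m_mass m_shift in auto)
  finally show ?thesis .
qed

lemma ln_one_plus_norm_sq_le:
  fixes x y :: "'a::real_normed_vector"
  assumes "norm (x - y) \<le> 1"
  shows "ln (1 + (norm x)\<^sup>2) \<le> ln (1 + (norm y)\<^sup>2) + 2"
proof -
  have "norm x \<le> norm y + 1"
    using assms norm_triangle_sub[of x y] by linarith
  then have "(norm x)\<^sup>2 \<le> (norm y + 1)\<^sup>2"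
    by (intro power_mono) auto
  also have "\<dots> \<le> 2 * (norm y)\<^sup>2 + 2"
    using zero_le_power2[of "norm y - 1"] unfolding power2_diff power2_sum by simp
  finally have "1 + (norm x)\<^sup>2 \<le> 3 * (1 + (norm y)\<^sup>2)"
    using zero_le_power2[of "norm y"] unfolding distrib_left by linarith
  then have "ln (1 + (norm x)\<^sup>2) \<le> ln (3 * (1 + (norm y)\<^sup>2))"
    by (intro ln_mono) (auto intro: add_pos_nonneg)
  also have "\<dots> = ln 3 + ln (1 + (norm y)\<^sup>2)"
    by (intro ln_mult_pos) (auto intro: add_pos_nonneg)
  also have "ln (3::real) \<le> 2"
    using ln_le_minus_one[of 3] by simp
  finally show ?thesis
    by simp
qed

lemma smooth_fun_continuous: "smooth_fun f \<Longrightarrow> continuous_on UNIV f"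
  by (erule smooth_fun.cases)
     (auto intro!: continuous_at_imp_continuous_on differentiable_imp_continuous_within)

lemma (in exp_scales) nn_integral_mu_eps_psi_log_le:
  fixes \<mu>0 :: "'a::euclidean_space measure"
  assumes "prob_space \<mu>0" and "sets \<mu>0 = sets borel"
    and "\<rho> \<in> borel_measurable borel" and "\<And>x. 0 \<le> \<rho> x" and "(\<integral>x. \<rho> x \<partial>lborel) = 1"
    and "\<And>x. \<rho> x \<noteq> 0 \<Longrightarrow> norm x < 1" and "0 \<le> \<epsilon>" and "\<epsilon> < 1"
  shows "(\<integral>\<^sup>+x. ennreal (psi s (ln (1 + (norm x)\<^sup>2))) \<partial>mu_eps \<mu>0 \<rho> \<epsilon>)
    \<le> (\<integral>\<^sup>+x. ennreal (psi s (ln (1 + (norm x)\<^sup>2))) \<partial>\<mu>0) + 2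
      + (\<integral>\<^sup>+x. ennreal (psi s (ln (1 + (norm x)\<^sup>2))) \<partial>(gauss_measure :: 'a measure))"
proof (rule nn_integral_mu_eps_le[OF assms(1-6) _ _ assms(7,8)])
  have "(\<lambda>x::'a. psi s (ln (1 + (norm x)\<^sup>2))) \<in> borel_measurable borel"
    by (rule borel_measurable_psi_comp[where h = "\<lambda>x. ln (1 + (norm x)\<^sup>2)"]) auto
  then show "(\<lambda>x::'a. ennreal (psi s (ln (1 + (norm x)\<^sup>2)))) \<in> borel_measurable borel"
    by measurable
  show "ennreal (psi s (ln (1 + (norm x)\<^sup>2))) \<le> ennreal (psi s (ln (1 + (norm y)\<^sup>2))) + 2"
    if "norm (x - y) < 1" for x y :: 'a
  proof -
    have "psi s (ln (1 + (norm x)\<^sup>2)) \<le> psi s (ln (1 + (norm y)\<^sup>2)) + 2"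
      using that ln_one_plus_norm_sq_le[of x y] by (intro psi_le_add) auto
    then have "ennreal (psi s (ln (1 + (norm x)\<^sup>2))) \<le> ennreal (psi s (ln (1 + (norm y)\<^sup>2)) + 2)"
      by (rule ennreal_leI)
    with psi_nonneg[of "ln (1 + (norm y)\<^sup>2)"] show ?thesis
      by simp
  qed
qed

theorem lemma3p4:
  fixes \<mu>0 :: "'a::euclidean_space measure" and \<rho> :: "'a \<Rightarrow> real" and l :: real
  assumes "0 < l" and "l < 1 / sqrt 2"
    and "prob_space \<mu>0" and "sets \<mu>0 = sets borel"
    and "smooth_fun \<rho>"
    and "\<exists>K. compact K \<and> K \<subseteq> ball 0 1 \<and> (\<forall>x. x \<notin> K \<longrightarrow> \<rho> x = 0)"
    and "\<forall>x. 0 \<le> \<rho> x"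
    and "(\<integral>x. \<rho> x \<partial>lborel) = 1"
  shows "\<exists>\<psi> \<psi>' \<psi>'' :: real \<Rightarrow> real.
           (\<forall>r\<ge>0. (\<psi> has_real_derivative \<psi>' r) (at r within {0..})) \<and>
           (\<forall>r\<ge>0. (\<psi>' has_real_derivative \<psi>'' r) (at r within {0..})) \<and>
           continuous_on {0..} \<psi>'' \<and>
           (\<forall>r\<ge>0. 0 \<le> \<psi> r) \<and> \<psi> 0 = 0 \<and>
           (\<forall>r\<ge>0. 0 < \<psi>' r \<and> \<psi>' r \<le> 1) \<and>
           (\<forall>r\<ge>0. -2 \<le> \<psi>'' r \<and> \<psi>'' r \<le> 0) \<and>
           filterlim \<psi> at_top at_top \<and>
           (SUP \<epsilon>\<in>{0..<l}. \<integral>\<^sup>+ x. ennreal (\<psi> (ln (1 + (norm x)\<^sup>2))) \<partial>(mu_eps \<mu>0 \<rho> \<epsilon>)) < \<infinity>"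
proof -
  have \<rho>_support: "norm x < 1" if "\<rho> x \<noteq> 0" for x
    using assms(6) that by (auto simp: subset_iff)
  have \<rho>_measurable: "\<rho> \<in> borel_measurable borel"
    using assms(5) by (intro borel_measurable_continuous_onI smooth_fun_continuous)
  have "l < 1"
    using assms(2) by (smt (verit) real_sqrt_gt_1_iff divide_less_eq_1_pos)
  obtain s where "exp_scales s" and psi_bound:
      "\<And>M. M \<in> {\<mu>0, gauss_measure} \<Longrightarrow> (\<integral>\<^sup>+x. ennreal (psi s (ln (1 + (norm x)\<^sup>2))) \<partial>M) \<le> 2"
    by (rule exists_exp_scales_nn_integral_psi_le[of "{\<mu>0, gauss_measure}" "\<lambda>x. ln (1 + (norm x)\<^sup>2)"])
       (use assms(3) in \<open>auto simp: measurable_cong_sets[OF assms(4) refl]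
          measurable_cong_sets[OF sets_gauss_measure refl]
          prob_space.finite_measure prob_space.finite_measure[OF prob_space_gauss_measure]\<close>)
  interpret exp_scales s by fact
  have "(\<integral>\<^sup>+x. ennreal (psi s (ln (1 + (norm x)\<^sup>2))) \<partial>mu_eps \<mu>0 \<rho> \<epsilon>) \<le> 6" if "\<epsilon> \<in> {0..<l}" for \<epsilon>
  proof -
    have "(\<integral>\<^sup>+x. ennreal (psi s (ln (1 + (norm x)\<^sup>2))) \<partial>mu_eps \<mu>0 \<rho> \<epsilon>)
        \<le> (\<integral>\<^sup>+x. ennreal (psi s (ln (1 + (norm x)\<^sup>2))) \<partial>\<mu>0) + 2
          + (\<integral>\<^sup>+x. ennreal (psi s (ln (1 + (norm x)\<^sup>2))) \<partial>(gauss_measure :: 'a measure))"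
      using that \<open>l < 1\<close> assms(3,4,7,8) \<rho>_measurable \<rho>_support
      by (intro nn_integral_mu_eps_psi_log_le) auto
    also have "\<dots> \<le> 2 + 2 + 2"
      using psi_bound by (intro add_mono) auto
    finally show ?thesis
      by simp
  qed
  then have "(SUP \<epsilon>\<in>{0..<l}. \<integral>\<^sup>+x. ennreal (psi s (ln (1 + (norm x)\<^sup>2))) \<partial>mu_eps \<mu>0 \<rho> \<epsilon>) \<le> 6"
    by (rule SUP_least)
  then have sup_finite:
      "(SUP \<epsilon>\<in>{0..<l}. \<integral>\<^sup>+x. ennreal (psi s (ln (1 + (norm x)\<^sup>2))) \<partial>mu_eps \<mu>0 \<rho> \<epsilon>) < \<infinity>"
    by (simp add: le_less_trans)
  have psi''_ge: "-2 \<le> psi'' s r" if "0 \<le> r" for r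
    using psi''_ge_minus_1[OF that] by linarith
  show ?thesis
  proof (rule exI[of _ "psi s"], rule exI[of _ "psi' s"], rule exI[of _ "psi'' s"], intro conjI allI impI)
  qed (use sup_finite psi_has_real_derivative psi'_has_real_derivative continuous_on_psi'' psi_nonneg
      psi_0 psi'_pos psi'_le_1 psi''_ge psi''_nonpos psi_tendsto_at_top in auto)
qed

end
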